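(* Fix $T\ge1$, $M>0$, $c>0$ and $\alpha$ with $\zeta(\alpha)\le 2$ ($\alpha\ge\zeta^{-1}(2)\approx1.7286$, $\zeta$ the Riemann zeta function). Let $E=\{0,1,\dots,\lfloor\log_2\sqrt{2T-1}\rfloor\}$. For each $i\in E$, expert $e_i$ runs OGP on $C$ with step $\eta_i=\frac{\rho}{\varrho\sqrt M}2^i$, subgradients $x_t^*(i)\in\partial\varphi_t(x_t(i))$ and arbitrary predictions $\widehat x_t^*(i)\in H$ with $\|\widehat x_t^*(i)\|\le\varrho$, producing $x_t(i)\in C$. A meta-learner runs ONES over $E$ with $\theta=c/\sqrt M$ and $\widetilde w_1(i)=\beta(i+2)^{-\alpha}$, $\beta^{-1}=\sum_{i\in E}(i+2)^{-\alpha}$, loss vectors $\ell_t(i)=\langle g_t,x_t(i)\rangle$ with $g_t\in\partial\varphi_t(\overline x_t)$, $\overline x_t=\sum_{i\in E}w_t(i)x_t(i)$, and arbitrary prediction vectors $\widehat\ell_t$; assume $\|\ell_t\|_\infty\le\rho\varrho$ and $\|\widehat\ell_t\|_\infty\le\rho\varrho$ for all $t$. Define $$Q_T(j)=4+\varrho^{-2}\sum_{t=1}^{T-1}\|x_t^*(j)-\widehat x_t^*(j)\|^2,\quad L_T=4+\rho^{-2}\varrho^{-2}\sum_{t=1}^{T-1}\|\ell_t-\widehat\ell_t\|_\infty^2,\quad M_T=\max\{L_T,\max_{j\in E}Q_T(j)\},$$ and suppose $M_T\le M$. Then there is a constant $K$ depending only on $\rho,\varrho,\alpha,c$ such that for every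 $z_1,\dots,z_T\in C$, with $P_T=\sum_{t=2}^T\|z_t-z_{t-1}\|$, $$\sum_{t=1}^T\varphi_t(\overline x_t)-\varphi_t(z_t)\le K\sqrt{(1+P_T)M}.$$
   Context: $H$ real Hilbert space; $C\subset H$ nonempty closed convex with diameter $\rho=\sup_{x,y\in C}\|x-y\|\in(0,\infty)$; losses $\varphi_t$ convex with $C\subset\operatorname{dom}\partial\varphi_t$ and $\|g\|\le\varrho<\infty$ for all $g\in\partial\varphi_t(x)$, $x\in C$. OGP with step $\eta$: $\widetilde{x}_{t+1}=P_C(\widetilde{x}_t-\eta x_t^* )$, $x_{t+1}=P_C(\widetilde{x}_{t+1}-\eta\widehat{x}_{t+1}^* )$, $\widetilde x_1\in C$, $P_C$ the metric projection. ONES with step $\theta$: $\widetilde w_{t+1}=\mathscr N(\widetilde w_t\circ e^{-\theta\ell_t})$, $w_{t}=\mathscr N(\widetilde w_{t}\circ e^{-\theta\widehat\ell_{t}})$, $\mathscr N(u)=u/\|u\|_1$, $\circ$ the Hadamard product. *)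

theory Defs
  imports "HOL-Analysis.Analysis"
begin

definition zeta_real :: "real \<Rightarrow> real" where
  "zeta_real s = (\<Sum>n. 1 / (real (Suc n)) powr s)"

definition convex_ereal :: "('a::real_vector \<Rightarrow> ereal) \<Rightarrow> bool" where
  "convex_ereal f \<longleftrightarrow> (\<forall>x. f x \<noteq> -\<infinity>) \<and>
     (\<forall>x y u. 0 \<le> u \<and> u \<le> 1 \<longrightarrow>
        f ((1 - u) *\<^sub>R x + u *\<^sub>R y) \<le> ereal (1 - u) * f x + ereal u * f y)"

definition subdiff :: "('a::real_inner \<Rightarrow> ereal) \<Rightarrow> 'a \<Rightarrow> 'a set" where
  "subdiff f x = {g. \<bar>f x\<bar> \<noteq> \<infinity> \<and> (\<forall>y. f x + ereal (inner g (y - x)) \<le> f y)}"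

definition metric_proj :: "'a::real_inner set \<Rightarrow> 'a \<Rightarrow> 'a" where
  "metric_proj C v = (THE p. p \<in> C \<and> (\<forall>y\<in>C. norm (v - p) \<le> norm (v - y)))"

definition experts :: "nat \<Rightarrow> nat set" where
  "experts T = {0 .. nat \<lfloor>log 2 (sqrt (2 * real T - 1))\<rfloor>}"

text \<open>Optimistic gradient projection (OGP) run of one expert with step eta:
  xs t = subgradients x_t^*, xh t = predictions, xt t = tilde x_t, x t = x_t.\<close>
definition ogp_run :: "'a::real_inner set \<Rightarrow> real \<Rightarrow> (nat \<Rightarrow> 'a) \<Rightarrow> (nat \<Rightarrow> 'a)
    \<Rightarrow> (nat \<Rightarrow> 'a) \<Rightarrow> (nat \<Rightarrow> 'a) \<Rightarrow> bool" where
  "ogp_run C \<eta> xs xh xt x \<longleftrightarrow> xt 1 \<in> C \<and>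
     (\<forall>t\<ge>1. xt (Suc t) = metric_proj C (xt t - \<eta> *\<^sub>R xs t)) \<and>
     (\<forall>t\<ge>1. x t = metric_proj C (xt t - \<eta> *\<^sub>R xh t))"

definition ones_run :: "nat set \<Rightarrow> real \<Rightarrow> (nat \<Rightarrow> real) \<Rightarrow> (nat \<Rightarrow> nat \<Rightarrow> real)
    \<Rightarrow> (nat \<Rightarrow> nat \<Rightarrow> real) \<Rightarrow> (nat \<Rightarrow> nat \<Rightarrow> real) \<Rightarrow> (nat \<Rightarrow> nat \<Rightarrow> real) \<Rightarrow> bool" where
  "ones_run E \<theta> w1 l lh wt w \<longleftrightarrow>
     (\<forall>i\<in>E. wt 1 i = w1 i) \<and>
     (\<forall>t\<ge>1. \<forall>i\<in>E. wt (Suc t) i =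
        wt t i * exp (- \<theta> * l t i) / (\<Sum>j\<in>E. wt t j * exp (- \<theta> * l t j))) \<and>
     (\<forall>t\<ge>1. \<forall>i\<in>E. w t i =
        wt t i * exp (- \<theta> * lh t i) / (\<Sum>j\<in>E. wt t j * exp (- \<theta> * lh t j)))"

definition supnorm :: "nat set \<Rightarrow> (nat \<Rightarrow> real) \<Rightarrow> real" where
  "supnorm E v = Max ((\<lambda>i. \<bar>v i\<bar>) ` E)"

end

theory Submission
  imports Defs
begin

text \<open>
  Fix a comparator sequence z of path length P. The OGP expert with step \<eta> has linearized regret
  \<Sum>t \<langle>xs t, x t - z t\<rangle> at most \<eta>/2 \<Sum>t \<parallel>xs t - xh t\<parallel>^2 + (\<rho>^2 + 2\<rho>P)/(2\<eta>): the two projection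
  inequalities of a round telescope in \<parallel>xt t - z t\<parallel>^2, and each move of the comparator costs
  2\<rho>\<parallel>z t - z (t - 1)\<parallel>. The ONES meta-learner has regret at most
  (-ln (w1 i) + 2\<theta>^2 \<Sum>t \<parallel>l t - lh t\<parallel>\<infinity>^2)/\<theta> against every expert i, by the potential
  ln \<Sum>j wt t j exp(-\<theta> l t j), and \<zeta>(\<alpha>) \<le> 2 gives -ln (w1 i) \<le> \<alpha> ln(i + 2). Two subgradient
  inequalities bound the dynamic regret by the meta regret plus the regret of any single expert.
  For i = \<lfloor>log2 \<surd>(1 + 2P/\<rho>)\<rfloor>, which lies in E because P \<le> \<rho>(T - 1), the step of expert i is within
  a factor 2 of the optimal one, and both regrets are O(\<surd>((1 + P) M)).
\<close>

section \<open>Metric projection onto closed convex sets\<close>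

lemma norm_diff_sq_midpoint:
  fixes v p q :: "'a::real_inner"
  shows "(norm (p - q))\<^sup>2 = 2 * (norm (v - p))\<^sup>2 + 2 * (norm (v - q))\<^sup>2 - 4 * (norm (v - midpoint p q))\<^sup>2"
  unfolding midpoint_def power2_norm_eq_inner
  by (simp add: inner_simps inner_commute algebra_simps)

lemma near_minimizers_close:
  fixes C :: "'a::real_inner set"
  assumes "convex C" "p \<in> C" "q \<in> C"
    and "(norm (v - p))\<^sup>2 \<le> (infdist v C)\<^sup>2 + e1" "(norm (v - q))\<^sup>2 \<le> (infdist v C)\<^sup>2 + e2"
  shows "(norm (p - q))\<^sup>2 \<le> 2 * (e1 + e2)"
proof -
  have "midpoint p q \<in> C"
    using convexD[OF assms(1-3), of "1/2" "1/2"] by (simp add: midpoint_def scaleR_right_distrib)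
  then have "infdist v C \<le> norm (v - midpoint p q)"
    by (metis infdist_le dist_norm)
  then have "(infdist v C)\<^sup>2 \<le> (norm (v - midpoint p q))\<^sup>2"
    by (simp add: infdist_nonneg power_mono)
  with assms(4,5) show ?thesis
    using norm_diff_sq_midpoint[of p q v] by (simp add: algebra_simps)
qed

lemma exists_near_minimizer:
  fixes C :: "'a::real_inner set"
  assumes "C \<noteq> {}" "e > 0"
  obtains y where "y \<in> C" "(norm (v - y))\<^sup>2 < (infdist v C)\<^sup>2 + e"
proof -
  define r where "r = sqrt ((infdist v C)\<^sup>2 + e)"
  have "(INF y\<in>C. dist v y) < r"
    using assms infdist_nonneg[of v C] infdist_notempty[OF assms(1), of v]
    by (simp add: r_def real_less_rsqrt)
  then obtain y where y: "y \<in> C" "dist v y < r"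
    using cINF_less_iff[OF assms(1) bdd_below_image_dist] by blast
  then have "(norm (v - y))\<^sup>2 < r\<^sup>2"
    by (simp add: dist_norm power_strict_mono)
  also have "r\<^sup>2 = (infdist v C)\<^sup>2 + e"
    using assms(2) by (simp add: r_def add_nonneg_pos less_imp_le)
  finally show thesis using y(1) that by blast
qed

lemma minimizing_sequence_Cauchy:
  fixes C :: "'a::real_inner set"
  assumes "convex C" "\<And>n. Y n \<in> C" "\<And>n. (norm (v - Y n))\<^sup>2 \<le> (infdist v C)\<^sup>2 + 1 / Suc n"
  shows "Cauchy Y"
proof (rule metric_CauchyI)
  fix e :: real assume "e > 0"
  obtain N :: nat where "4 / e\<^sup>2 < N"
    using reals_Archimedean2 by blast
  then have "4 / e\<^sup>2 < Suc N"
    by simp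
  then have "4 / Suc N < e\<^sup>2"
    using \<open>e > 0\<close> by (simp add: field_simps)
  have "dist (Y m) (Y n) < e" if "N \<le> m" "N \<le> n" for m n
  proof -
    have "(norm (Y m - Y n))\<^sup>2 \<le> 2 * (1 / Suc m + 1 / Suc n)"
      using near_minimizers_close[OF assms(1) assms(2) assms(2) assms(3) assms(3)] .
    also have "\<dots> \<le> 2 * (1 / Suc N + 1 / Suc N)"
      using that by (intro mult_left_mono add_mono) (simp_all add: frac_le)
    finally have "(dist (Y m) (Y n))\<^sup>2 < e\<^sup>2"
      using \<open>4 / Suc N < e\<^sup>2\<close> by (simp add: dist_norm)
    with \<open>e > 0\<close> show ?thesis
      by (simp add: power_less_imp_less_base)
  qed
  then show "\<exists>N. \<forall>m\<ge>N. \<forall>n\<ge>N. dist (Y m) (Y n) < e"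
    by blast
qed

text \<open>The library's \<open>closest_point\<close> needs a Heine--Borel space; in a Hilbert space completeness
  replaces compactness, since minimizing sequences are Cauchy by the parallelogram law.\<close>

lemma nearest_point_exists:
  fixes C :: "'a::{real_inner,complete_space} set"
  assumes "closed C" "convex C" "C \<noteq> {}"
  obtains p where "p \<in> C" "\<forall>y\<in>C. norm (v - p) \<le> norm (v - y)"
proof -
  define d where "d = infdist v C"
  have "\<exists>y\<in>C. (norm (v - y))\<^sup>2 < d\<^sup>2 + 1 / Suc n" for n
    using exists_near_minimizer[OF assms(3), of "1 / Suc n" v] unfolding d_def by auto
  then obtain Y where Y: "\<And>n. Y n \<in> C" "\<And>n. (norm (v - Y n))\<^sup>2 < d\<^sup>2 + 1 / Suc n"
    by metis
  then have "Cauchy Y"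
    by (intro minimizing_sequence_Cauchy[OF assms(2), of Y v]) (simp_all add: d_def less_imp_le)
  then obtain p where p: "Y \<longlonglongrightarrow> p"
    using Cauchy_convergent_iff convergent_def by blast
  have "p \<in> C"
    using closed_sequentially[OF assms(1)] Y(1) p by blast
  have "(\<lambda>n. (norm (v - Y n))\<^sup>2) \<longlonglongrightarrow> (norm (v - p))\<^sup>2"
    by (intro tendsto_intros p)
  moreover have "(\<lambda>n. d\<^sup>2 + 1 / Suc n) \<longlonglongrightarrow> d\<^sup>2 + 0"
    by (intro tendsto_intros LIMSEQ_Suc[OF lim_const_over_n])
  ultimately have "(norm (v - p))\<^sup>2 \<le> d\<^sup>2 + 0"
    by (rule LIMSEQ_le) (use Y(2) less_imp_le in blast)
  then have "norm (v - p) \<le> d"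
    by (simp add: d_def infdist_nonneg power2_le_iff_abs_le)
  moreover have "d \<le> norm (v - y)" if "y \<in> C" for y
    using infdist_le[OF that, of v] by (simp add: d_def dist_norm)
  ultimately show thesis
    using that \<open>p \<in> C\<close> by fastforce
qed

lemma metric_proj_nearest:
  fixes C :: "'a::{real_inner,complete_space} set"
  assumes "closed C" "convex C" "C \<noteq> {}"
  shows "metric_proj C v \<in> C" "\<forall>y\<in>C. norm (v - metric_proj C v) \<le> norm (v - y)"
proof -
  obtain p where "p \<in> C" "\<forall>y\<in>C. norm (v - p) \<le> norm (v - y)"
    using nearest_point_exists[OF assms] .
  then have "\<exists>!p. p \<in> C \<and> (\<forall>y\<in>C. norm (v - p) \<le> norm (v - y))"
    using any_closest_point_unique[OF assms(2,1)] by (metis dist_norm)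
  then have "metric_proj C v \<in> C \<and> (\<forall>y\<in>C. norm (v - metric_proj C v) \<le> norm (v - y))"
    unfolding metric_proj_def by (rule theI')
  then show "metric_proj C v \<in> C" "\<forall>y\<in>C. norm (v - metric_proj C v) \<le> norm (v - y)"
    by auto
qed

lemma metric_proj_inner_le:
  fixes C :: "'a::{real_inner,complete_space} set"
  assumes "closed C" "convex C" "y \<in> C"
  shows "inner (v - metric_proj C v) (y - metric_proj C v) \<le> 0"
proof -
  have "C \<noteq> {}" using assms(3) by blast
  then show ?thesis
    using any_closest_point_dot[OF assms(2,1) metric_proj_nearest(1) assms(3)] metric_proj_nearest(2)
    by (metis assms(1,2) dist_norm)
qed

section \<open>Optimistic gradient projection\<close>

lemma optimistic_step_bound:
  fixes xt xt' x a h u :: "'a::real_inner"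
  assumes "inner (xt - \<eta> *\<^sub>R a - xt') (u - xt') \<le> 0"
    and "inner (xt - \<eta> *\<^sub>R h - x) (xt' - x) \<le> 0"
  shows "2 * \<eta> * inner a (x - u) \<le> \<eta>\<^sup>2 * (norm (a - h))\<^sup>2 + (norm (xt - u))\<^sup>2 - (norm (xt' - u))\<^sup>2"
proof -
  \<comment> \<open>Add the two projection inequalities and complete the square in \<open>\<eta> (a - h)\<close>.\<close>
  have "0 \<le> (norm (\<eta> *\<^sub>R (a - h) - (x - xt')))\<^sup>2" "0 \<le> (norm (xt - x))\<^sup>2"
    by simp_all
  with assms show ?thesis
    unfolding power2_norm_eq_inner
    by (simp add: inner_simps inner_commute algebra_simps power2_eq_square)
qed

lemma sum_telescope_le:
  fixes A B D :: "nat \<Rightarrow> real"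
  assumes "T \<ge> 1" "A 1 \<le> r" "\<And>t. 1 \<le> t \<Longrightarrow> t < T \<Longrightarrow> A (Suc t) - B t \<le> D (Suc t)"
    and "\<And>t. 0 \<le> B t"
  shows "(\<Sum>t=1..T. A t - B t) \<le> r + (\<Sum>t=2..T. D t)"
proof -
  have "(\<Sum>t=1..Suc n. A t - B t) + B (Suc n) \<le> r + (\<Sum>t=2..Suc n. D t)" if "Suc n \<le> T" for n
    using that
  proof (induction n)
    case 0
    then show ?case using assms(2) by simp
  next
    case (Suc n)
    then have "(\<Sum>t=1..Suc n. A t - B t) + B (Suc n) \<le> r + (\<Sum>t=2..Suc n. D t)"
      by simp
    moreover have "A (Suc (Suc n)) - B (Suc n) \<le> D (Suc (Suc n))"
      using assms(3)[of "Suc n"] Suc.prems by simp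
    ultimately show ?case by simp
  qed
  moreover obtain n where "T = Suc n"
    using assms(1) by (cases T) auto
  ultimately show ?thesis
    using assms(4)[of T] by fastforce
qed

lemma norm_sq_diff_le_diameter:
  fixes C :: "'a::real_normed_vector set"
  assumes "bounded C" "p \<in> C" "q \<in> C" "r \<in> C"
  shows "(norm (p - q))\<^sup>2 - (norm (p - r))\<^sup>2 \<le> 2 * diameter C * norm (q - r)"
proof -
  define a b where "a = norm (p - q)" and "b = norm (p - r)"
  have "\<bar>a - b\<bar> \<le> norm (q - r)"
    using norm_triangle_ineq3[of "p - q" "p - r"] by (simp add: a_def b_def norm_minus_commute)
  moreover have "a + b \<le> 2 * diameter C"
    using diameter_bounded_bound[OF assms(1,2,3)] diameter_bounded_bound[OF assms(1,2,4)]
    by (simp add: a_def b_def dist_norm)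
  moreover have "0 \<le> a + b"
    by (simp add: a_def b_def)
  ultimately have "\<bar>a - b\<bar> * (a + b) \<le> norm (q - r) * (2 * diameter C)"
    by (intro mult_mono) auto
  moreover have "a\<^sup>2 - b\<^sup>2 \<le> \<bar>a - b\<bar> * (a + b)"
  proof -
    have "a\<^sup>2 - b\<^sup>2 = (a - b) * (a + b)"
      by (simp add: power2_eq_square algebra_simps)
    also have "\<dots> \<le> \<bar>a - b\<bar> * (a + b)"
      using \<open>0 \<le> a + b\<close> by (intro mult_right_mono) auto
    finally show ?thesis .
  qed
  ultimately show ?thesis
    by (simp add: a_def b_def mult.commute)
qed

lemma ogp_run_in_set:
  fixes C :: "'a::{real_inner,complete_space} set"
  assumes "closed C" "convex C" "ogp_run C \<eta> xs xh xt x" "t \<ge> 1"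
  shows "xt t \<in> C" "x t \<in> C"
proof -
  have "C \<noteq> {}"
    using assms(3) unfolding ogp_run_def by blast
  note proj = metric_proj_nearest(1)[OF assms(1,2) this]
  show "x t \<in> C"
    using assms(3,4) proj unfolding ogp_run_def by metis
  show "xt t \<in> C"
  proof (cases "t = 1")
    case True
    then show ?thesis using assms(3) unfolding ogp_run_def by blast
  next
    case False
    with assms(4) obtain s where "t = Suc s" "s \<ge> 1"
      by (cases t) auto
    then show ?thesis
      using assms(3) proj unfolding ogp_run_def by metis
  qed
qed

theorem ogp_regret:
  fixes C :: "'a::{real_inner,complete_space} set"
  assumes C: "closed C" "convex C" "bounded C" and "\<eta> > 0"
    and run: "ogp_run C \<eta> xs xh xt x" and "T \<ge> 1" and z: "\<forall>t\<in>{1..T}. z t \<in> C"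
  shows "(\<Sum>t=1..T. inner (xs t) (x t - z t)) \<le> \<eta> / 2 * (\<Sum>t=1..T. (norm (xs t - xh t))\<^sup>2)
           + ((diameter C)\<^sup>2 + 2 * diameter C * (\<Sum>t=2..T. norm (z t - z (t - 1)))) / (2 * \<eta>)"
proof -
  define A where "A t = (norm (xt t - z t))\<^sup>2" for t
  define B where "B t = (norm (xt (Suc t) - z t))\<^sup>2" for t
  define D where "D t = 2 * diameter C * norm (z t - z (t - 1))" for t
  have step: "2 * \<eta> * inner (xs t) (x t - z t) \<le> \<eta>\<^sup>2 * (norm (xs t - xh t))\<^sup>2 + A t - B t"
    if t: "t \<in> {1..T}" for t
  proof -
    have "xt (Suc t) = metric_proj C (xt t - \<eta> *\<^sub>R xs t)" "x t = metric_proj C (xt t - \<eta> *\<^sub>R xh t)"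
      using run t unfolding ogp_run_def by auto
    then have "inner (xt t - \<eta> *\<^sub>R xs t - xt (Suc t)) (z t - xt (Suc t)) \<le> 0"
      and "inner (xt t - \<eta> *\<^sub>R xh t - x t) (xt (Suc t) - x t) \<le> 0"
      using metric_proj_inner_le[OF C(1,2)] z t ogp_run_in_set[OF C(1,2) run, of "Suc t"] by auto
    then show ?thesis
      unfolding A_def B_def by (rule optimistic_step_bound)
  qed
  have tel: "(\<Sum>t=1..T. A t - B t) \<le> (diameter C)\<^sup>2 + (\<Sum>t=2..T. D t)"
  proof (rule sum_telescope_le[OF \<open>T \<ge> 1\<close>])
    show "A 1 \<le> (diameter C)\<^sup>2"
      using diameter_bounded_bound[OF C(3) ogp_run_in_set(1)[OF C(1,2) run order.refl], of "z 1"] z \<open>T \<ge> 1\<close>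
      by (simp add: A_def dist_norm power_mono)
    show "A (Suc t) - B t \<le> D (Suc t)" if "1 \<le> t" "t < T" for t
      unfolding A_def B_def D_def
      using norm_sq_diff_le_diameter[OF C(3) ogp_run_in_set(1)[OF C(1,2) run]] z that by simp
  qed (simp add: B_def)
  have "(\<Sum>t=1..T. 2 * \<eta> * inner (xs t) (x t - z t))
      \<le> (\<Sum>t=1..T. \<eta>\<^sup>2 * (norm (xs t - xh t))\<^sup>2 + A t - B t)"
    by (rule sum_mono) (rule step)
  also have "\<dots> = \<eta>\<^sup>2 * (\<Sum>t=1..T. (norm (xs t - xh t))\<^sup>2) + (\<Sum>t=1..T. A t - B t)"
    by (simp add: sum.distrib sum_subtractf sum_distrib_left)
  finally have "(\<Sum>t=1..T. 2 * \<eta> * inner (xs t) (x t - z t))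
      \<le> \<eta>\<^sup>2 * (\<Sum>t=1..T. (norm (xs t - xh t))\<^sup>2) + ((diameter C)\<^sup>2 + (\<Sum>t=2..T. D t))"
    using tel by linarith
  then have "2 * \<eta> * (\<Sum>t=1..T. inner (xs t) (x t - z t))
      \<le> \<eta>\<^sup>2 * (\<Sum>t=1..T. (norm (xs t - xh t))\<^sup>2) + ((diameter C)\<^sup>2 + 2 * diameter C * (\<Sum>t=2..T. norm (z t - z (t - 1))))"
    by (simp add: D_def sum_distrib_left)
  with \<open>\<eta> > 0\<close> show ?thesis
    by (simp add: field_simps power2_eq_square)
qed

section \<open>The optimistic normalized exponential scheme\<close>

lemma exp_le_quadratic:
  fixes y :: real
  assumes "\<bar>y\<bar> \<le> 1"
  shows "exp y \<le> 1 + y + y\<^sup>2"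
proof (cases "y \<ge> 0")
  case True
  then show ?thesis using exp_bound[of y] assms by simp
next
  case False
  define x where "x = - y"
  have x: "0 \<le> x" "x \<le> 1" using False assms by (auto simp: x_def)
  have "(1 - x + x\<^sup>2) * (1 + x + x\<^sup>2 / 2) = 1 + x\<^sup>2 / 2 + x ^ 3 / 2 + x ^ 4 / 2"
    by (simp add: power2_eq_square power3_eq_cube power4_eq_xxxx field_simps)
  also have "1 \<le> \<dots>" using x by simp
  also have "(1 - x + x\<^sup>2) * (1 + x + x\<^sup>2 / 2) \<le> (1 - x + x\<^sup>2) * exp x"
    using x by (intro mult_left_mono exp_lower_Taylor_quadratic) (simp_all add: power2_eq_square)
  finally have "exp (- x) \<le> 1 - x + x\<^sup>2"
    by (simp add: exp_minus field_simps)
  then show ?thesis by (simp add: x_def)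
qed

lemma ln_mean_exp_le:
  fixes w y :: "'i \<Rightarrow> real"
  assumes "finite E" "\<forall>j\<in>E. w j \<ge> 0" "(\<Sum>j\<in>E. w j) = 1" "\<forall>j\<in>E. \<bar>y j\<bar> \<le> a"
  shows "ln (\<Sum>j\<in>E. w j * exp (y j)) \<le> (\<Sum>j\<in>E. w j * y j) + 2 * a\<^sup>2"
proof -
  define m where "m = (\<Sum>j\<in>E. w j * y j)"
  have mean: "(\<Sum>j\<in>E. w j * f j) \<le> (\<Sum>j\<in>E. w j * g j)" if "\<And>j. j \<in> E \<Longrightarrow> f j \<le> g j" for f g
    using assms(2) that by (intro sum_mono mult_left_mono) auto
  have "(\<Sum>j\<in>E. w j * exp (- a)) \<le> (\<Sum>j\<in>E. w j * exp (y j))"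
    by (rule mean) (use assms(4) in \<open>auto simp: abs_le_iff\<close>)
  then have "exp (- a) \<le> (\<Sum>j\<in>E. w j * exp (y j))"
    by (simp add: assms(3) flip: sum_distrib_right)
  then have pos: "0 < (\<Sum>j\<in>E. w j * exp (y j))"
    by (meson exp_gt_zero less_le_trans)
  have "(\<Sum>j\<in>E. w j * - a) \<le> m"
    unfolding m_def by (rule mean) (use assms(4) in \<open>auto simp: abs_le_iff\<close>)
  then have "- a \<le> m"
    by (simp add: assms(3) sum_negf flip: sum_distrib_right)
  show ?thesis
  proof (cases "a \<ge> 1")
    case True
    have "(\<Sum>j\<in>E. w j * exp (y j)) \<le> (\<Sum>j\<in>E. w j * exp a)"
      by (rule mean) (use assms(4) in \<open>auto simp: abs_le_iff\<close>)
    then have "(\<Sum>j\<in>E. w j * exp (y j)) \<le> exp a"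
      by (simp add: assms(3) flip: sum_distrib_right)
    then have "ln (\<Sum>j\<in>E. w j * exp (y j)) \<le> a"
      using pos by (metis ln_exp ln_mono)
    moreover have "a \<le> a\<^sup>2" using True by (simp add: power2_eq_square)
    ultimately show ?thesis using \<open>- a \<le> m\<close> by (simp add: m_def)
  next
    case False
    have "(\<Sum>j\<in>E. w j * exp (y j)) \<le> (\<Sum>j\<in>E. w j * (1 + y j + a\<^sup>2))"
    proof (rule mean)
      fix j assume "j \<in> E"
      then have "\<bar>y j\<bar> \<le> a" using assms(4) by blast
      then have "exp (y j) \<le> 1 + y j + (y j)\<^sup>2" and "(y j)\<^sup>2 \<le> a\<^sup>2"
        using False exp_le_quadratic[of "y j"] power_mono[of "\<bar>y j\<bar>" a 2] by simp_all
      then show "exp (y j) \<le> 1 + y j + a\<^sup>2" by simp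
    qed
    also have "\<dots> = 1 + m + a\<^sup>2"
      using assms(3) by (simp add: m_def algebra_simps sum.distrib flip: sum_distrib_right)
    finally have "ln (\<Sum>j\<in>E. w j * exp (y j)) \<le> m + a\<^sup>2"
      using pos ln_le_minus_one[of "\<Sum>j\<in>E. w j * exp (y j)"] by linarith
    then show ?thesis
      using zero_le_power2[of a] unfolding m_def by linarith
  qed
qed

lemma normalized_weights:
  fixes p f :: "'i \<Rightarrow> real"
  assumes "finite E" "E \<noteq> {}" "\<forall>j\<in>E. p j > 0"
  shows "\<forall>j\<in>E. p j * exp (f j) / (\<Sum>i\<in>E. p i * exp (f i)) > 0"
    and "(\<Sum>j\<in>E. p j * exp (f j) / (\<Sum>i\<in>E. p i * exp (f i))) = 1"
proof -
  have "(\<Sum>i\<in>E. p i * exp (f i)) > 0"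
    using assms by (intro sum_pos) auto
  then show "\<forall>j\<in>E. p j * exp (f j) / (\<Sum>i\<in>E. p i * exp (f i)) > 0"
    and "(\<Sum>j\<in>E. p j * exp (f j) / (\<Sum>i\<in>E. p i * exp (f i))) = 1"
    using assms(3) by (simp_all flip: sum_divide_distrib)
qed

lemma ones_run_weights:
  assumes "finite E" "E \<noteq> {}" "ones_run E \<theta> w1 l lh wt w"
    and "\<forall>j\<in>E. w1 j > 0" "(\<Sum>j\<in>E. w1 j) = 1" "t \<ge> 1"
  shows "\<forall>j\<in>E. wt t j > 0" "(\<Sum>j\<in>E. wt t j) = 1" "\<forall>j\<in>E. w t j > 0" "(\<Sum>j\<in>E. w t j) = 1"
proof -
  have wt: "(\<forall>j\<in>E. wt t j > 0) \<and> (\<Sum>j\<in>E. wt t j) = 1"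
    using \<open>t \<ge> 1\<close>
  proof (induction t rule: dec_induct)
    case base
    then show ?case using assms(3-5) unfolding ones_run_def by simp
  next
    case (step t)
    then show ?case
      using normalized_weights[OF assms(1,2), of "wt t" "\<lambda>j. - \<theta> * l t j"] assms(3)
      unfolding ones_run_def by simp
  qed
  then show "\<forall>j\<in>E. wt t j > 0" "(\<Sum>j\<in>E. wt t j) = 1"
    by simp_all
  show "\<forall>j\<in>E. w t j > 0" "(\<Sum>j\<in>E. w t j) = 1"
    using normalized_weights[OF assms(1,2), of "wt t" "\<lambda>j. - \<theta> * lh t j"] wt assms(3,6)
    unfolding ones_run_def by simp_all
qed

lemma optimistic_log_partition_le:
  fixes p q l h :: "'i \<Rightarrow> real"
  assumes E: "finite E" "E \<noteq> {}" and p: "\<forall>j\<in>E. p j > 0" "(\<Sum>j\<in>E. p j) = 1"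
    and "\<theta> \<ge> 0" "\<forall>j\<in>E. \<bar>l j - h j\<bar> \<le> D"
    and q: "\<forall>j\<in>E. q j = p j * exp (- \<theta> * h j) / (\<Sum>i\<in>E. p i * exp (- \<theta> * h i))"
  shows "ln (\<Sum>j\<in>E. p j * exp (- \<theta> * l j)) \<le> - \<theta> * (\<Sum>j\<in>E. q j * l j) + 2 * \<theta>\<^sup>2 * D\<^sup>2"
proof -
  define A where "A = (\<Sum>i\<in>E. p i * exp (- \<theta> * h i))"
  have "A > 0"
    unfolding A_def using E p by (intro sum_pos) auto
  have qA: "q j * A = p j * exp (- \<theta> * h j)" if "j \<in> E" for j
    using q that \<open>A > 0\<close> by (simp add: A_def)
  have q_pos: "\<forall>j\<in>E. q j > 0" and q_sum: "(\<Sum>j\<in>E. q j) = 1"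
    using normalized_weights[OF E p(1), of "\<lambda>j. - \<theta> * h j"] q by simp_all
  define B where "B = (\<Sum>j\<in>E. q j * exp (- \<theta> * (l j - h j)))"
  have "(\<Sum>j\<in>E. p j * exp (- \<theta> * l j)) = (\<Sum>j\<in>E. (q j * A) * exp (- \<theta> * (l j - h j)))"
    using qA by (intro sum.cong) (simp_all add: algebra_simps flip: exp_add)
  also have "\<dots> = A * B"
    by (simp add: B_def sum_distrib_left algebra_simps)
  finally have AB: "(\<Sum>j\<in>E. p j * exp (- \<theta> * l j)) = A * B" .
  have "B > 0"
    unfolding B_def using E q_pos by (intro sum_pos) auto
  have "ln B \<le> (\<Sum>j\<in>E. q j * (- \<theta> * (l j - h j))) + 2 * (\<theta> * D)\<^sup>2"
    unfolding B_def using q_pos q_sum assms(5,6)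
    by (intro ln_mean_exp_le[OF E(1)]) (auto simp: abs_mult intro: mult_left_mono)
  moreover have "ln A \<le> - \<theta> * (\<Sum>j\<in>E. q j * h j)"
  proof -
    \<comment> \<open>Gibbs' inequality: with \<open>A exp(\<theta> h j) = p j / q j\<close>, the mean of \<open>ln (p/q)\<close> under \<open>q\<close> is at most 0.\<close>
    have "ln A + \<theta> * (\<Sum>j\<in>E. q j * h j) = (\<Sum>j\<in>E. q j * ln (A * exp (\<theta> * h j)))"
      using \<open>A > 0\<close> q_sum
      by (simp add: ln_mult sum.distrib sum_distrib_left algebra_simps flip: sum_distrib_left)
    also have "\<dots> \<le> (\<Sum>j\<in>E. q j * (A * exp (\<theta> * h j) - 1))"
      using q_pos \<open>A > 0\<close> by (intro sum_mono mult_left_mono ln_le_minus_one) auto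
    also have "\<dots> = (\<Sum>j\<in>E. p j - q j)"
    proof (rule sum.cong[OF refl])
      fix j assume "j \<in> E"
      then have "q j * A * exp (\<theta> * h j) = p j"
        using qA by (simp add: exp_minus)
      then show "q j * (A * exp (\<theta> * h j) - 1) = p j - q j"
        by (simp add: algebra_simps)
    qed
    also have "\<dots> = 0"
      using p(2) q_sum by (simp add: sum_subtractf)
    finally show ?thesis by simp
  qed
  moreover have "(\<Sum>j\<in>E. q j * (- \<theta> * (l j - h j))) = - \<theta> * (\<Sum>j\<in>E. q j * l j) + \<theta> * (\<Sum>j\<in>E. q j * h j)"
    by (simp add: sum_distrib_left sum_subtractf sum_negf algebra_simps)
  ultimately show ?thesis
    using AB \<open>A > 0\<close> \<open>B > 0\<close> by (simp add: ln_mult power_mult_distrib)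
qed

theorem ones_regret:
  assumes E: "finite E" "i \<in> E" and "\<theta> > 0" and run: "ones_run E \<theta> w1 l lh wt w"
    and w1: "\<forall>j\<in>E. w1 j > 0" "(\<Sum>j\<in>E. w1 j) = 1"
    and D: "\<And>t j. j \<in> E \<Longrightarrow> \<bar>l t j - lh t j\<bar> \<le> D t"
  shows "\<theta> * (\<Sum>t=1..T. (\<Sum>j\<in>E. w t j * l t j) - l t i) \<le> - ln (w1 i) + 2 * \<theta>\<^sup>2 * (\<Sum>t=1..T. (D t)\<^sup>2)"
proof -
  have "E \<noteq> {}" using E(2) by blast
  note weights = ones_run_weights[OF E(1) this run w1]
  define Z where "Z t = (\<Sum>j\<in>E. wt t j * exp (- \<theta> * l t j))" for t
  have Z_le: "ln (Z t) \<le> - \<theta> * (\<Sum>j\<in>E. w t j * l t j) + 2 * \<theta>\<^sup>2 * (D t)\<^sup>2" if "t \<ge> 1" for t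
    unfolding Z_def
    using \<open>E \<noteq> {}\<close> \<open>\<theta> > 0\<close> D run that
    by (intro optimistic_log_partition_le[OF E(1)] weights) (auto simp: ones_run_def)
  have Z_pos: "Z t > 0" if "t \<ge> 1" for t
    unfolding Z_def using E \<open>E \<noteq> {}\<close> weights(1)[OF that] by (intro sum_pos) auto
  have "ln (wt (Suc n) i) = ln (w1 i) - (\<Sum>t=1..n. \<theta> * l t i + ln (Z t))" for n
  proof (induction n)
    case 0
    then show ?case using run E(2) by (simp add: ones_run_def)
  next
    case (Suc n)
    have "wt (Suc (Suc n)) i = wt (Suc n) i * exp (- \<theta> * l (Suc n) i) / Z (Suc n)"
      using run E(2) by (simp add: ones_run_def Z_def)
    moreover have "wt (Suc n) i > 0"
      using weights(1)[of "Suc n"] E(2) by simp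
    ultimately have "ln (wt (Suc (Suc n)) i) = ln (wt (Suc n) i) - \<theta> * l (Suc n) i - ln (Z (Suc n))"
      using Z_pos[of "Suc n"] by (simp add: ln_div ln_mult)
    with Suc.IH show ?case by simp
  qed
  moreover have "ln (wt (Suc T) i) \<le> 0"
    using member_le_sum[OF E(2) _ E(1), of "wt (Suc T)"] weights(1,2)[of "Suc T"] E(2)
    by (simp add: less_imp_le)
  ultimately have "ln (w1 i) \<le> (\<Sum>t=1..T. \<theta> * l t i + ln (Z t))"
    by simp
  moreover have "(\<Sum>t=1..T. \<theta> * ((\<Sum>j\<in>E. w t j * l t j) - l t i))
      \<le> (\<Sum>t=1..T. - ln (Z t) + 2 * \<theta>\<^sup>2 * (D t)\<^sup>2 - \<theta> * l t i)"
    using Z_le by (intro sum_mono) (force simp: algebra_simps)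
  ultimately show ?thesis
    by (simp add: sum_distrib_left sum.distrib sum_subtractf algebra_simps)
qed

lemma supnorm_ge:
  assumes "finite E" "j \<in> E"
  shows "\<bar>v j\<bar> \<le> supnorm E v"
  unfolding supnorm_def using assms by (intro Max_ge) auto

lemma supnorm_diff_le:
  assumes "finite E" "E \<noteq> {}"
  shows "supnorm E (\<lambda>j. a j - b j) \<le> supnorm E a + supnorm E b"
proof -
  have "\<bar>a j - b j\<bar> \<le> supnorm E a + supnorm E b" if "j \<in> E" for j
    using supnorm_ge[OF assms(1) that, of a] supnorm_ge[OF assms(1) that, of b] by linarith
  then show ?thesis
    using assms unfolding supnorm_def[of E "\<lambda>j. a j - b j"] by simp
qed

lemma sum_shifted_powr_le_zeta:
  assumes "\<alpha> > 1" "finite E"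
  shows "(\<Sum>j\<in>E. (real j + 2) powr (- \<alpha>)) \<le> zeta_real \<alpha> - 1"
proof -
  define f where "f n = 1 / (real (Suc n)) powr \<alpha>" for n
  have "summable (\<lambda>n. real n powr (- \<alpha>))"
    using summable_real_powr_iff assms(1) by simp
  then have "summable f"
    unfolding f_def by (subst (asm) summable_Suc_iff[symmetric]) (simp add: powr_minus_divide)
  have "(\<Sum>j\<in>E. (real j + 2) powr (- \<alpha>)) = (\<Sum>j\<in>E. f (Suc j))"
    by (simp add: f_def powr_minus_divide add.commute)
  also have "\<dots> \<le> (\<Sum>n. f (Suc n))"
    using \<open>summable f\<close> summable_Suc_iff
    by (intro sum_le_suminf assms(2)) (blast, simp add: f_def)
  also have "\<dots> = suminf f - f 0"
    by (rule suminf_split_head[OF \<open>summable f\<close>])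
  also have "\<dots> = zeta_real \<alpha> - 1"
    unfolding zeta_real_def f_def[abs_def] by simp
  finally show ?thesis .
qed

lemma neg_ln_prior_weight_le:
  assumes "\<alpha> > 1" "zeta_real \<alpha> \<le> 2" "finite E" "i \<in> E"
  shows "- ln ((real i + 2) powr (- \<alpha>) / (\<Sum>j\<in>E. (real j + 2) powr (- \<alpha>))) \<le> \<alpha> * ln (real i + 2)"
proof -
  define S where "S = (\<Sum>j\<in>E. (real j + 2) powr (- \<alpha>))"
  have "0 < S" "S \<le> 1"
    using sum_shifted_powr_le_zeta[OF assms(1,3)] assms(2-4) unfolding S_def
    by (auto intro: sum_pos)
  then show ?thesis
    by (simp add: S_def[symmetric] ln_div ln_powr)
qed

lemma ones_prior_regret:
  assumes "\<alpha> > 1" "zeta_real \<alpha> \<le> 2" "finite E" "i \<in> E" "\<theta> > 0"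
    and run: "ones_run E \<theta> (\<lambda>i. (real i + 2) powr (- \<alpha>) / (\<Sum>j\<in>E. (real j + 2) powr (- \<alpha>))) l lh wt w"
  shows "\<theta> * (\<Sum>t=1..T. (\<Sum>j\<in>E. w t j * l t j) - l t i)
           \<le> \<alpha> * ln (real i + 2) + 2 * \<theta>\<^sup>2 * (\<Sum>t=1..T. (supnorm E (\<lambda>j. l t j - lh t j))\<^sup>2)"
proof -
  have "(\<Sum>j\<in>E. (real j + 2) powr (- \<alpha>)) > 0"
    using assms(3,4) by (intro sum_pos) auto
  then have "\<theta> * (\<Sum>t=1..T. (\<Sum>j\<in>E. w t j * l t j) - l t i)
      \<le> - ln ((real i + 2) powr (- \<alpha>) / (\<Sum>j\<in>E. (real j + 2) powr (- \<alpha>)))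
        + 2 * \<theta>\<^sup>2 * (\<Sum>t=1..T. (supnorm E (\<lambda>j. l t j - lh t j))\<^sup>2)"
    by (intro ones_regret[OF assms(3-5) run _ _ supnorm_ge[OF assms(3)]]) (simp_all flip: sum_divide_distrib)
  with neg_ln_prior_weight_le[OF assms(1-4)] show ?thesis
    by linarith
qed

section \<open>Combining the experts\<close>

lemma sum_sq_le_of_budget:
  fixes d :: "nat \<Rightarrow> real"
  assumes "T \<ge> 1" "B > 0" "4 + (\<Sum>t=1..T-1. (d t)\<^sup>2) / B\<^sup>2 \<le> M" "\<bar>d T\<bar> \<le> 2 * B"
  shows "(\<Sum>t=1..T. (d t)\<^sup>2) \<le> B\<^sup>2 * M"
proof -
  have "(\<Sum>t=1..T-1. (d t)\<^sup>2) / B\<^sup>2 \<le> M - 4"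
    using assms(3) by linarith
  then have "(\<Sum>t=1..T-1. (d t)\<^sup>2) \<le> (M - 4) * B\<^sup>2"
    using assms(2) by (simp add: pos_divide_le_eq)
  moreover have "(d T)\<^sup>2 \<le> 4 * B\<^sup>2"
    using power_mono[OF assms(4), of 2] by (simp add: power_mult_distrib)
  moreover have "(\<Sum>t=1..T. (d t)\<^sup>2) = (\<Sum>t=1..T-1. (d t)\<^sup>2) + (d T)\<^sup>2"
    using assms(1) by (cases T) auto
  ultimately show ?thesis
    by (simp add: algebra_simps)
qed

lemma subdiff_two_point_bound:
  fixes f :: "'a::real_inner \<Rightarrow> ereal"
  assumes "g \<in> subdiff f a" "h \<in> subdiff f b" "subdiff f c \<noteq> {}"
  shows "f a - f c \<le> ereal (inner g (a - b) + inner h (b - c))"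
proof -
  have "\<bar>f x\<bar> \<noteq> \<infinity>" if "subdiff f x \<noteq> {}" for x
    using that unfolding subdiff_def by force
  then have "f x = ereal (real_of_ereal (f x))" if "subdiff f x \<noteq> {}" for x
    using that by (simp add: ereal_real')
  then obtain ra rb rc where "f a = ereal ra" "f b = ereal rb" "f c = ereal rc"
    using assms by blast
  moreover have "f a + ereal (inner g (b - a)) \<le> f b" "f b + ereal (inner h (c - b)) \<le> f c"
    using assms(1,2) unfolding subdiff_def by auto
  ultimately show ?thesis
    by (simp add: inner_diff_right)
qed

lemma ensemble_regret_split:
  fixes \<phi> :: "nat \<Rightarrow> 'a::real_inner \<Rightarrow> ereal"
  assumes "\<forall>t\<in>{1..T}. g t \<in> subdiff (\<phi> t) (\<Sum>j\<in>E. w t j *\<^sub>R x t j)"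
    and "\<forall>t\<in>{1..T}. h t \<in> subdiff (\<phi> t) (x t i)" "\<forall>t\<in>{1..T}. subdiff (\<phi> t) (z t) \<noteq> {}"
  shows "(\<Sum>t=1..T. \<phi> t (\<Sum>j\<in>E. w t j *\<^sub>R x t j) - \<phi> t (z t))
    \<le> ereal ((\<Sum>t=1..T. (\<Sum>j\<in>E. w t j * inner (g t) (x t j)) - inner (g t) (x t i))
             + (\<Sum>t=1..T. inner (h t) (x t i - z t)))"
proof -
  have "(\<Sum>t=1..T. \<phi> t (\<Sum>j\<in>E. w t j *\<^sub>R x t j) - \<phi> t (z t))
      \<le> (\<Sum>t=1..T. ereal (inner (g t) ((\<Sum>j\<in>E. w t j *\<^sub>R x t j) - x t i) + inner (h t) (x t i - z t)))"
    using assms by (intro sum_mono subdiff_two_point_bound) auto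
  then show ?thesis
    by (simp add: inner_diff_right inner_sum_right sum.distrib sum_subtractf)
qed

lemma path_length_le_diameter:
  assumes "bounded C" "T \<ge> 1" "\<forall>t\<in>{1..T}. z t \<in> C"
  shows "(\<Sum>t=2..T. norm (z t - z (t - 1))) \<le> diameter C * (real T - 1)"
proof -
  have "(\<Sum>t=2..T. norm (z t - z (t - 1))) \<le> real (card {2..T}) * diameter C"
  proof (rule sum_bounded_above)
    fix t assume "t \<in> {2..T}"
    then have "t \<in> {1..T}" "t - 1 \<in> {1..T}"
      by auto
    then have "z t \<in> C" "z (t - 1) \<in> C"
      using assms(3) by blast+
    then show "norm (z t - z (t - 1)) \<le> diameter C"
      using diameter_bounded_bound[OF assms(1)] by (simp add: dist_norm)
  qed
  then show ?thesis
    using assms(2) by (simp add: mult.commute)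
qed

lemma floor_log2_bounds:
  fixes s :: real
  assumes "s \<ge> 1"
  shows "2 ^ nat \<lfloor>log 2 s\<rfloor> \<le> s" "s < 2 * 2 ^ nat \<lfloor>log 2 s\<rfloor>"
proof -
  have "\<lfloor>log 2 s\<rfloor> \<ge> 0"
    using assms by simp
  then have "2 powr real (nat \<lfloor>log 2 s\<rfloor>) \<le> s \<and> s < 2 powr (real (nat \<lfloor>log 2 s\<rfloor>) + 1)"
    using floor_log_eq_powr_iff[of s 2 "\<lfloor>log 2 s\<rfloor>"] assms by simp
  then show "2 ^ nat \<lfloor>log 2 s\<rfloor> \<le> s" "s < 2 * 2 ^ nat \<lfloor>log 2 s\<rfloor>"
    by (simp_all add: powr_add powr_realpow)
qed

lemma grid_index_in_experts:
  assumes "\<rho> > 0" "0 \<le> P" "P \<le> \<rho> * (real T - 1)"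
  shows "nat \<lfloor>log 2 (sqrt (1 + 2 * P / \<rho>))\<rfloor> \<in> experts T"
proof -
  have "1 + 2 * P / \<rho> \<le> 2 * real T - 1"
    using assms by (simp add: field_simps)
  then have "log 2 (sqrt (1 + 2 * P / \<rho>)) \<le> log 2 (sqrt (2 * real T - 1))"
    using assms by (intro log_mono) (simp_all add: add_pos_nonneg)
  then show ?thesis
    unfolding experts_def by (simp add: floor_mono nat_mono)
qed

lemma ogp_tuned_bound:
  assumes "\<rho> > 0" "G > 0" "M > 0" "P \<ge> 0"
    and s: "s = sqrt (1 + 2 * P / \<rho>)" "2 ^ i \<le> s" "s < 2 * 2 ^ i"
    and \<eta>: "\<eta> = \<rho> / (G * sqrt M) * 2 ^ i"
  shows "\<eta> / 2 * (G\<^sup>2 * M) + (\<rho>\<^sup>2 + 2 * \<rho> * P) / (2 * \<eta>) \<le> 3 / 2 * \<rho> * G * s * sqrt M"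
proof -
  have "M = (sqrt M)\<^sup>2" "s\<^sup>2 = 1 + 2 * P / \<rho>"
    using assms by simp_all
  then have "\<eta> / 2 * (G\<^sup>2 * M) = \<rho> * G * 2 ^ i * sqrt M / 2"
    and "(\<rho>\<^sup>2 + 2 * \<rho> * P) / (2 * \<eta>) = \<rho> * G * s * sqrt M * (s / (2 * 2 ^ i))"
    using assms by (simp_all add: \<eta> field_simps power2_eq_square)
  moreover have "\<rho> * G * 2 ^ i * sqrt M / 2 \<le> \<rho> * G * s * sqrt M / 2"
    using assms by (intro divide_right_mono mult_right_mono mult_left_mono) simp_all
  moreover have "\<rho> * G * s * sqrt M * (s / (2 * 2 ^ i)) \<le> \<rho> * G * s * sqrt M * 1"
    using assms by (intro mult_left_mono) simp_all
  ultimately show ?thesis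
    by linarith
qed

lemma tuned_regret_le:
  assumes pos: "\<rho> > 0" "G > 0" "c > 0" "\<alpha> > 0" "M > 0" "P \<ge> 0"
    and s: "s = sqrt (1 + 2 * P / \<rho>)" "2 ^ i \<le> s" "s < 2 * 2 ^ i"
    and meta: "c / sqrt M * meta \<le> \<alpha> * ln (real i + 2) + 2 * (c / sqrt M)\<^sup>2 * (\<rho>\<^sup>2 * G\<^sup>2 * M)"
    and expert: "expert \<le> 3 / 2 * \<rho> * G * s * sqrt M"
  shows "meta + expert \<le> (\<alpha> / c + 3 * \<rho> * G / 2 + 2 * c * \<rho>\<^sup>2 * G\<^sup>2) * sqrt (1 + 2 / \<rho>) * sqrt ((1 + P) * M)"
proof -
  have "s \<ge> 1"
    using s(1) pos by simp
  have "ln (real i + 2) \<le> real i + 1"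
    using ln_le_minus_one[of "real i + 2"] by simp
  also have "\<dots> \<le> 2 ^ i"
    using of_nat_mono[OF Suc_leI[OF less_exp[of i]], where 'a=real] by simp
  finally have "\<alpha> * ln (real i + 2) \<le> \<alpha> * s"
    using s(2) pos by (intro mult_left_mono) simp_all
  with meta have "meta * (c / sqrt M) \<le> \<alpha> * s + 2 * (c / sqrt M)\<^sup>2 * (\<rho>\<^sup>2 * G\<^sup>2 * M)"
    by (simp add: mult.commute)
  moreover have "c / sqrt M > 0"
    using pos by simp
  ultimately have "meta \<le> (\<alpha> * s + 2 * (c / sqrt M)\<^sup>2 * (\<rho>\<^sup>2 * G\<^sup>2 * M)) / (c / sqrt M)"
    by (simp only: pos_le_divide_eq)
  also have "\<dots> = \<alpha> / c * s * sqrt M + 2 * c * \<rho>\<^sup>2 * G\<^sup>2 * sqrt M"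
    using pos by (simp add: field_simps power2_eq_square)
  also have "\<dots> \<le> \<alpha> / c * s * sqrt M + 2 * c * \<rho>\<^sup>2 * G\<^sup>2 * s * sqrt M"
    using \<open>s \<ge> 1\<close> pos by simp
  finally have bound: "meta + expert \<le> (\<alpha> / c + 3 * \<rho> * G / 2 + 2 * c * \<rho>\<^sup>2 * G\<^sup>2) * s * sqrt M"
    using expert by (simp add: algebra_simps)
  have "s \<le> sqrt (1 + 2 / \<rho>) * sqrt (1 + P)"
    using pos by (simp add: s(1) field_simps flip: real_sqrt_mult)
  then have "(\<alpha> / c + 3 * \<rho> * G / 2 + 2 * c * \<rho>\<^sup>2 * G\<^sup>2) * s * sqrt M
      \<le> (\<alpha> / c + 3 * \<rho> * G / 2 + 2 * c * \<rho>\<^sup>2 * G\<^sup>2) * (sqrt (1 + 2 / \<rho>) * sqrt (1 + P)) * sqrt M"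
    using pos by (intro mult_right_mono mult_left_mono) simp_all
  with bound show ?thesis
    by (simp add: real_sqrt_mult mult.assoc)
qed

lemma meta_regret_le:
  assumes "\<alpha> > 1" "zeta_real \<alpha> \<le> 2" "finite E" "i \<in> E" "\<rho> > 0" "G > 0" "c > 0" "M > 0" "T \<ge> 1"
    and run: "ones_run E (c / sqrt M) (\<lambda>i. (real i + 2) powr (- \<alpha>) / (\<Sum>j\<in>E. (real j + 2) powr (- \<alpha>))) l lh wt w"
    and bounded: "supnorm E (l T) \<le> \<rho> * G" "supnorm E (lh T) \<le> \<rho> * G"
    and budget: "4 + (\<Sum>t=1..T-1. (supnorm E (\<lambda>j. l t j - lh t j))\<^sup>2) / (\<rho>\<^sup>2 * G\<^sup>2) \<le> M"
  shows "c / sqrt M * (\<Sum>t=1..T. (\<Sum>j\<in>E. w t j * l t j) - l t i)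
           \<le> \<alpha> * ln (real i + 2) + 2 * (c / sqrt M)\<^sup>2 * (\<rho>\<^sup>2 * G\<^sup>2 * M)"
proof -
  have "E \<noteq> {}" using assms(4) by blast
  have "\<bar>supnorm E (\<lambda>j. l T j - lh T j)\<bar> \<le> 2 * (\<rho> * G)"
    using supnorm_diff_le[OF assms(3) \<open>E \<noteq> {}\<close>, of "l T" "lh T"] supnorm_ge[OF assms(3,4), of "\<lambda>j. l T j - lh T j"] bounded
    by linarith
  then have "(\<Sum>t=1..T. (supnorm E (\<lambda>j. l t j - lh t j))\<^sup>2) \<le> \<rho>\<^sup>2 * G\<^sup>2 * M"
    using sum_sq_le_of_budget[OF assms(9), of "\<rho> * G"] budget assms(5,6)
    by (simp add: power_mult_distrib)
  then have "2 * (c / sqrt M)\<^sup>2 * (\<Sum>t=1..T. (supnorm E (\<lambda>j. l t j - lh t j))\<^sup>2)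
      \<le> 2 * (c / sqrt M)\<^sup>2 * (\<rho>\<^sup>2 * G\<^sup>2 * M)"
    by (intro mult_left_mono) simp_all
  moreover have "c / sqrt M > 0"
    using assms(7,8) by simp
  ultimately show ?thesis
    using ones_prior_regret[OF assms(1-4) _ run, of T] by linarith
qed

lemma expert_regret_le:
  fixes C :: "'a::{real_inner,complete_space} set"
  assumes C: "closed C" "convex C" "bounded C" "diameter C = \<rho>"
    and "\<rho> > 0" "G > 0" "M > 0" "T \<ge> 1"
    and s: "s = sqrt (1 + 2 * P / \<rho>)" "2 ^ i \<le> s" "s < 2 * 2 ^ i"
    and P: "P = (\<Sum>t=2..T. norm (z t - z (t - 1)))" and z: "\<forall>t\<in>{1..T}. z t \<in> C"
    and run: "ogp_run C (\<rho> / (G * sqrt M) * 2 ^ i) xs xh xt x"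
    and bounded: "norm (xs T) \<le> G" "norm (xh T) \<le> G"
    and budget: "4 + (\<Sum>t=1..T-1. (norm (xs t - xh t))\<^sup>2) / G\<^sup>2 \<le> M"
  shows "(\<Sum>t=1..T. inner (xs t) (x t - z t)) \<le> 3 / 2 * \<rho> * G * s * sqrt M"
proof -
  define \<eta> where "\<eta> = \<rho> / (G * sqrt M) * 2 ^ i"
  have "\<eta> > 0"
    using assms by (simp add: \<eta>_def)
  have "\<bar>norm (xs T - xh T)\<bar> \<le> 2 * G"
    using norm_triangle_ineq4[of "xs T" "xh T"] bounded by simp
  then have "(\<Sum>t=1..T. (norm (xs t - xh t))\<^sup>2) \<le> G\<^sup>2 * M"
    using sum_sq_le_of_budget[OF \<open>T \<ge> 1\<close> \<open>G > 0\<close> budget] by blast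
  then have "\<eta> / 2 * (\<Sum>t=1..T. (norm (xs t - xh t))\<^sup>2) \<le> \<eta> / 2 * (G\<^sup>2 * M)"
    using \<open>\<eta> > 0\<close> by (intro mult_left_mono) simp_all
  then have "(\<Sum>t=1..T. inner (xs t) (x t - z t)) \<le> \<eta> / 2 * (G\<^sup>2 * M) + (\<rho>\<^sup>2 + 2 * \<rho> * P) / (2 * \<eta>)"
    using ogp_regret[OF C(1-3) \<open>\<eta> > 0\<close> run[folded \<eta>_def] \<open>T \<ge> 1\<close> z]
    unfolding C(4) P[symmetric] by linarith
  also have "\<dots> \<le> 3 / 2 * \<rho> * G * s * sqrt M"
    using path_length_le_diameter[OF C(3) \<open>T \<ge> 1\<close> z]
    by (intro ogp_tuned_bound[OF \<open>\<rho> > 0\<close> \<open>G > 0\<close> \<open>M > 0\<close> _ s \<eta>_def]) (simp add: P sum_nonneg)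
  finally show ?thesis .
qed

lemma optimistic_ensemble_regret:
  fixes \<rho> G \<alpha> c M :: real and T :: nat and C :: "'a::{real_inner,complete_space} set"
    and \<phi> :: "nat \<Rightarrow> 'a \<Rightarrow> ereal" and xs xh xt x :: "nat \<Rightarrow> nat \<Rightarrow> 'a" and g z :: "nat \<Rightarrow> 'a"
    and lh wt w :: "nat \<Rightarrow> nat \<Rightarrow> real"
  defines "E \<equiv> experts T"
  assumes pos: "\<rho> > 0" "G > 0" "c > 0" and \<alpha>: "\<alpha> > 1" "zeta_real \<alpha> \<le> 2"
    and "T \<ge> 1" "M > 0"
    and C: "C \<noteq> {}" "closed C" "convex C" "bounded C" "diameter C = \<rho>"
    and \<phi>: "\<forall>t\<ge>1. convex_ereal (\<phi> t) \<and> (\<forall>y\<in>C. subdiff (\<phi> t) y \<noteq> {} \<and>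
                  (\<forall>v\<in>subdiff (\<phi> t) y. norm v \<le> G))"
    and ogp: "\<forall>i\<in>E. ogp_run C (\<rho> / (G * sqrt M) * 2 ^ i) (\<lambda>t. xs t i) (\<lambda>t. xh t i)
                   (\<lambda>t. xt t i) (\<lambda>t. x t i)"
    and xs: "\<forall>t\<ge>1. \<forall>i\<in>E. xs t i \<in> subdiff (\<phi> t) (x t i) \<and> norm (xh t i) \<le> G"
    and ones: "ones_run E (c / sqrt M)
           (\<lambda>i. (real i + 2) powr (-\<alpha>) / (\<Sum>j\<in>E. (real j + 2) powr (-\<alpha>)))
           (\<lambda>t i. inner (g t) (x t i)) lh wt w"
    and g: "\<forall>t\<ge>1. g t \<in> subdiff (\<phi> t) (\<Sum>i\<in>E. w t i *\<^sub>R x t i)"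
    and losses: "\<forall>t\<ge>1. supnorm E (\<lambda>i. inner (g t) (x t i)) \<le> \<rho> * G \<and> supnorm E (lh t) \<le> \<rho> * G"
    and budget: "max (4 + (\<Sum>t=1..T-1. (supnorm E (\<lambda>i. inner (g t) (x t i) - lh t i))\<^sup>2) / (\<rho>\<^sup>2 * G\<^sup>2))
                 (Max ((\<lambda>j. 4 + (\<Sum>t=1..T-1. (norm (xs t j - xh t j))\<^sup>2) / G\<^sup>2) ` E)) \<le> M"
    and z: "\<forall>t\<in>{1..T}. z t \<in> C"
  shows "(\<Sum>t=1..T. \<phi> t (\<Sum>i\<in>E. w t i *\<^sub>R x t i) - \<phi> t (z t))
           \<le> ereal ((\<alpha> / c + 3 * \<rho> * G / 2 + 2 * c * \<rho>\<^sup>2 * G\<^sup>2) * sqrt (1 + 2 / \<rho>)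
                    * sqrt ((1 + (\<Sum>t=2..T. norm (z t - z (t - 1)))) * M))"
proof -
  define P where "P = (\<Sum>t=2..T. norm (z t - z (t - 1)))"
  define s where "s = sqrt (1 + 2 * P / \<rho>)"
  define i where "i = nat \<lfloor>log 2 s\<rfloor>"
  \<comment> \<open>The optimal OGP step for path length \<open>P\<close> would be \<open>\<rho> s / (G \<surd>M)\<close>; expert \<open>i\<close> is within a factor 2.\<close>
  have "finite E"
    by (simp add: E_def experts_def)
  have "0 \<le> P" "P \<le> \<rho> * (real T - 1)"
    using path_length_le_diameter[OF C(4) \<open>T \<ge> 1\<close> z] C(5) by (simp_all add: P_def sum_nonneg)
  then have "i \<in> E" "2 ^ i \<le> s" "s < 2 * 2 ^ i"
    using grid_index_in_experts[of \<rho> P T] floor_log2_bounds[of s] pos(1)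
    by (simp_all add: E_def i_def s_def)
  have "(\<Sum>t=1..T. \<phi> t (\<Sum>i\<in>E. w t i *\<^sub>R x t i) - \<phi> t (z t))
      \<le> ereal ((\<Sum>t=1..T. (\<Sum>j\<in>E. w t j * inner (g t) (x t j)) - inner (g t) (x t i))
               + (\<Sum>t=1..T. inner (xs t i) (x t i - z t)))"
  proof (rule ensemble_regret_split)
    show "\<forall>t\<in>{1..T}. g t \<in> subdiff (\<phi> t) (\<Sum>j\<in>E. w t j *\<^sub>R x t j)"
      using g by simp
    show "\<forall>t\<in>{1..T}. xs t i \<in> subdiff (\<phi> t) (x t i)"
      using xs \<open>i \<in> E\<close> by simp
    show "\<forall>t\<in>{1..T}. subdiff (\<phi> t) (z t) \<noteq> {}"
      using \<phi> z by simp
  qed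
  also have "\<dots> \<le> ereal ((\<alpha> / c + 3 * \<rho> * G / 2 + 2 * c * \<rho>\<^sup>2 * G\<^sup>2) * sqrt (1 + 2 / \<rho>) * sqrt ((1 + P) * M))"
  proof (subst ereal_less_eq(3), intro tuned_regret_le[OF pos _ \<open>M > 0\<close> \<open>0 \<le> P\<close> s_def \<open>2 ^ i \<le> s\<close> \<open>s < 2 * 2 ^ i\<close>])
    show "c / sqrt M * (\<Sum>t=1..T. (\<Sum>j\<in>E. w t j * inner (g t) (x t j)) - inner (g t) (x t i))
        \<le> \<alpha> * ln (real i + 2) + 2 * (c / sqrt M)\<^sup>2 * (\<rho>\<^sup>2 * G\<^sup>2 * M)"
      using budget losses \<open>T \<ge> 1\<close>
      by (intro meta_regret_le[OF \<alpha> \<open>finite E\<close> \<open>i \<in> E\<close> pos \<open>M > 0\<close> \<open>T \<ge> 1\<close> ones]) auto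
    have "x T i \<in> C"
      using ogp_run_in_set(2)[OF C(2,3)] ogp \<open>i \<in> E\<close> \<open>T \<ge> 1\<close> by blast
    then have "norm (xs T i) \<le> G" "norm (xh T i) \<le> G"
      using \<phi> xs \<open>i \<in> E\<close> \<open>T \<ge> 1\<close> by blast+
    moreover have "4 + (\<Sum>t=1..T-1. (norm (xs t i - xh t i))\<^sup>2) / G\<^sup>2 \<le> M"
      using budget Max_ge[of "(\<lambda>j. 4 + (\<Sum>t=1..T-1. (norm (xs t j - xh t j))\<^sup>2) / G\<^sup>2) ` E"]
        \<open>finite E\<close> \<open>i \<in> E\<close> by fastforce
    moreover have "ogp_run C (\<rho> / (G * sqrt M) * 2 ^ i) (\<lambda>t. xs t i) (\<lambda>t. xh t i) (\<lambda>t. xt t i) (\<lambda>t. x t i)"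
      using ogp \<open>i \<in> E\<close> by blast
    ultimately show "(\<Sum>t=1..T. inner (xs t i) (x t i - z t)) \<le> 3 / 2 * \<rho> * G * s * sqrt M"
      using expert_regret_le[OF C(2-5) pos(1,2) \<open>M > 0\<close> \<open>T \<ge> 1\<close> s_def \<open>2 ^ i \<le> s\<close> \<open>s < 2 * 2 ^ i\<close> P_def z]
      by blast
  qed (use \<open>\<alpha> > 1\<close> in simp)
  finally show ?thesis
    by (simp add: P_def)
qed

theorem theorem1:
  fixes \<rho> G \<alpha> c :: real
  assumes "\<rho> > 0" and "G > 0" and "c > 0"
    and "\<alpha> > 1" and "zeta_real \<alpha> \<le> 2"
  shows "\<exists>K::real. \<forall>(T::nat) (M::real) (C::'a::{real_inner,complete_space} set)
      (\<phi>::nat \<Rightarrow> 'a \<Rightarrow> ereal) (xs::nat \<Rightarrow> nat \<Rightarrow> 'a) (xh::nat \<Rightarrow> nat \<Rightarrow> 'a)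
      (xt::nat \<Rightarrow> nat \<Rightarrow> 'a) (x::nat \<Rightarrow> nat \<Rightarrow> 'a) (g::nat \<Rightarrow> 'a)
      (lh::nat \<Rightarrow> nat \<Rightarrow> real) (wt::nat \<Rightarrow> nat \<Rightarrow> real) (w::nat \<Rightarrow> nat \<Rightarrow> real)
      (z::nat \<Rightarrow> 'a).
    let E = experts T;
        xbar = (\<lambda>t. \<Sum>i\<in>E. w t i *\<^sub>R x t i);
        l = (\<lambda>t i. inner (g t) (x t i));
        Q = (\<lambda>j. 4 + (\<Sum>t=1..T-1. (norm (xs t j - xh t j))\<^sup>2) / G\<^sup>2);
        L = 4 + (\<Sum>t=1..T-1. (supnorm E (\<lambda>i. l t i - lh t i))\<^sup>2) / (\<rho>\<^sup>2 * G\<^sup>2)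
    in (T \<ge> 1 \<and> M > 0 \<and>
        C \<noteq> {} \<and> closed C \<and> convex C \<and> bounded C \<and> diameter C = \<rho> \<and>
        (\<forall>t\<ge>1. convex_ereal (\<phi> t) \<and> (\<forall>y\<in>C. subdiff (\<phi> t) y \<noteq> {} \<and>
                  (\<forall>v\<in>subdiff (\<phi> t) y. norm v \<le> G))) \<and>
        (\<forall>i\<in>E. ogp_run C (\<rho> / (G * sqrt M) * 2 ^ i) (\<lambda>t. xs t i) (\<lambda>t. xh t i)
                   (\<lambda>t. xt t i) (\<lambda>t. x t i)) \<and>
        (\<forall>t\<ge>1. \<forall>i\<in>E. xs t i \<in> subdiff (\<phi> t) (x t i) \<and> norm (xh t i) \<le> G) \<and>
        ones_run E (c / sqrt M)
           (\<lambda>i. (real i + 2) powr (-\<alpha>) / (\<Sum>j\<in>E. (real j + 2) powr (-\<alpha>))) l lh wt w \<and>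
        (\<forall>t\<ge>1. g t \<in> subdiff (\<phi> t) (xbar t)) \<and>
        (\<forall>t\<ge>1. supnorm E (l t) \<le> \<rho> * G \<and> supnorm E (lh t) \<le> \<rho> * G) \<and>
        max L (Max (Q ` E)) \<le> M \<and>
        (\<forall>t\<in>{1..T}. z t \<in> C))
     \<longrightarrow> (\<Sum>t=1..T. \<phi> t (xbar t) - \<phi> t (z t))
           \<le> ereal (K * sqrt ((1 + (\<Sum>t=2..T. norm (z t - z (t - 1)))) * M))"
  unfolding Let_def
  by (intro exI[of _ "(\<alpha> / c + 3 * \<rho> * G / 2 + 2 * c * \<rho>\<^sup>2 * G\<^sup>2) * sqrt (1 + 2 / \<rho>)"] allI impI,
      elim conjE, rule optimistic_ensemble_regret[OF assms]) assumption+

end
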